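(* For each prime $p$, there are at most two extreme symmetric triples whose smallest element is $p$, and at most one extreme symmetric sequence of length $4$ whose smallest element is $p$. There is no extreme symmetric sequence of length greater than $4$.
   Context: Two distinct primes $p$ and $q$ form a symmetric pair if $\gcd(p-1, q-1) = |p-q|$. A symmetric sequence is a finite set of primes in which any two distinct primes form a symmetric pair; its length is the number of primes in it, and a symmetric triple is a symmetric sequence of length $3$. A symmetric sequence is called extreme if, writing $p$ for its smallest prime, its largest prime is $2p-1$. *)

theory Defs
  imports "HOL-Computational_Algebra.Primes"
begin

definition symmetric_pair :: "nat \<Rightarrow> nat \<Rightarrow> bool" where
  "symmetric_pair p q \<longleftrightarrow> prime p \<and> prime q \<and> p \<noteq> q \<and>
     int (gcd (p - 1) (q - 1)) = \<bar>int p - int q\<bar>"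

definition symmetric_sequence :: "nat set \<Rightarrow> bool" where
  "symmetric_sequence S \<longleftrightarrow> finite S \<and> (\<forall>p\<in>S. prime p) \<and>
     (\<forall>p\<in>S. \<forall>q\<in>S. p \<noteq> q \<longrightarrow> symmetric_pair p q)"

definition extreme :: "nat set \<Rightarrow> bool" where
  "extreme S \<longleftrightarrow> S \<noteq> {} \<and> Max S = 2 * Min S - 1"

end

theory Submission
  imports Defs
begin

text \<open>Let \<open>p < x < q = 2p - 1\<close> be three members of an extreme symmetric sequence and \<open>d = x - p\<close>.
  Since \<open>gcd (p - 1) (x - 1) = d\<close>, we have \<open>p - 1 = d m\<close>; then \<open>q - x = d (m - 1)\<close> divides
  \<open>x - 1 = d (m + 1)\<close>, so \<open>m - 1\<close> divides 2 and \<open>m \<in> {2, 3}\<close>. Hence every extreme symmetric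
  sequence with smallest element \<open>p\<close> lies in the four-element set
  \<open>{p, 2p - 1, p + (p - 1)/2, p + (p - 1)/3}\<close> and contains its two ends, from which all three
  bounds follow by counting.\<close>

lemma symmetric_pair_gcd_eq:
  assumes "symmetric_pair p x" "p < x"
  shows "gcd (p - 1) (x - 1) = x - p"
  using assms unfolding symmetric_pair_def by linarith

lemma diff_one_dvd_add_one_nat:
  fixes m :: nat
  assumes "m - 1 dvd m + 1" "2 \<le> m"
  shows "m = 2 \<or> m = 3"
proof -
  have "m + 1 = (m - 1) + 2" using assms(2) by simp
  with assms(1) have "m - 1 dvd 2" by (metis dvd_add_right_iff dvd_refl)
  then have "m - 1 \<le> 2" by (rule dvd_imp_le) simp
  with assms(2) show ?thesis by linarith
qed

lemma symmetric_pair_middle: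
  assumes px: "symmetric_pair p x" and xq: "symmetric_pair x (2 * p - 1)"
    and "p < x" "x < 2 * p - 1"
  shows "x = p + (p - 1) div 2 \<or> x = p + (p - 1) div 3"
proof -
  define d where "d = x - p"
  have "d > 0" using \<open>p < x\<close> by (simp add: d_def)
  have "d dvd p - 1" using symmetric_pair_gcd_eq[OF px \<open>p < x\<close>] by (metis d_def gcd_dvd1)
  then obtain m where m: "p - 1 = d * m" by (elim dvdE)
  have "p \<ge> 1" using px prime_ge_1_nat by (auto simp: symmetric_pair_def)
  have "2 * p - 1 - x = (p - 1) - d" using \<open>p < x\<close> by (simp add: d_def)
  moreover have "x - 1 = (p - 1) + d" using \<open>p \<ge> 1\<close> \<open>p < x\<close> by (simp add: d_def)
  ultimately have "2 * p - 1 - x = d * (m - 1)" "x - 1 = d * (m + 1)"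
    using m by (simp_all add: diff_mult_distrib2)
  moreover have "2 * p - 1 - x dvd x - 1"
    using symmetric_pair_gcd_eq[OF xq \<open>x < 2 * p - 1\<close>] by (metis gcd_dvd1)
  ultimately have "m - 1 dvd m + 1"
    using \<open>d > 0\<close> by (simp add: nat_mult_dvd_cancel_disj del: One_nat_def)
  moreover have "2 \<le> m"
  proof (rule ccontr)
    assume "\<not> 2 \<le> m"
    then have "m = 0 \<or> m = 1" by auto
    then show False using m \<open>p < x\<close> \<open>x < 2 * p - 1\<close> by (auto simp: d_def)
  qed
  ultimately have "m = 2 \<or> m = 3" by (rule diff_one_dvd_add_one_nat)
  then show ?thesis using m \<open>d > 0\<close> \<open>p < x\<close> by (auto simp: d_def)
qed

definition extreme_candidates :: "nat \<Rightarrow> nat set" where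
  "extreme_candidates p = {p, 2 * p - 1, p + (p - 1) div 2, p + (p - 1) div 3}"

lemma finite_extreme_candidates: "finite (extreme_candidates p)"
  by (simp add: extreme_candidates_def)

lemma card_extreme_candidates_le: "card (extreme_candidates p) \<le> 4"
  unfolding extreme_candidates_def by (rule card_insert_le_m1; simp add: card_insert_le_m1)+

lemma card_extreme_candidates_diff_ends_le:
  "card (extreme_candidates p - {p, 2 * p - 1}) \<le> 2"
proof -
  have "extreme_candidates p - {p, 2 * p - 1} \<subseteq> {p + (p - 1) div 2, p + (p - 1) div 3}"
    by (auto simp: extreme_candidates_def)
  then have "card (extreme_candidates p - {p, 2 * p - 1}) \<le> card {p + (p - 1) div 2, p + (p - 1) div 3}"
    by (rule card_mono[rotated]) simp
  also have "\<dots> \<le> 2" by (simp add: card_insert_le_m1)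
  finally show ?thesis .
qed

lemma extreme_symmetric_sequence_ends:
  assumes "symmetric_sequence S" "extreme S"
  shows "Min S \<in> S" "2 * Min S - 1 \<in> S" "card {Min S, 2 * Min S - 1} = 2"
proof -
  have "finite S" "S \<noteq> {}"
    using assms unfolding symmetric_sequence_def extreme_def by auto
  then show "Min S \<in> S" "2 * Min S - 1 \<in> S"
    using assms(2) by (auto simp: extreme_def dest: Max_in)
  then have "prime (Min S)" using assms(1) by (auto simp: symmetric_sequence_def)
  then show "card {Min S, 2 * Min S - 1} = 2" using prime_ge_2_nat[of "Min S"] by simp
qed

lemma extreme_symmetric_sequence_subset:
  assumes S: "symmetric_sequence S" "extreme S"
  shows "S \<subseteq> extreme_candidates (Min S)"
proof
  fix x assume "x \<in> S"
  define p where "p = Min S"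
  have "finite S" using S by (simp add: symmetric_sequence_def)
  have "p \<in> S" "2 * p - 1 \<in> S"
    using extreme_symmetric_sequence_ends[OF S] by (simp_all add: p_def)
  have "p \<le> x" "x \<le> Max S"
    using \<open>x \<in> S\<close> \<open>finite S\<close> by (simp_all add: p_def)
  then have "x \<le> 2 * p - 1" using S(2) by (simp add: extreme_def p_def)
  show "x \<in> extreme_candidates (Min S)"
  proof (cases "x = p \<or> x = 2 * p - 1")
    case True
    then show ?thesis by (auto simp: extreme_candidates_def p_def)
  next
    case False
    with \<open>p \<le> x\<close> \<open>x \<le> 2 * p - 1\<close> have "p < x" "x < 2 * p - 1" by auto
    moreover have "symmetric_pair p x" "symmetric_pair x (2 * p - 1)"
      using S(1) \<open>x \<in> S\<close> \<open>p \<in> S\<close> \<open>2 * p - 1 \<in> S\<close> False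
      by (auto simp: symmetric_sequence_def)
    ultimately show ?thesis
      using symmetric_pair_middle by (auto simp: extreme_candidates_def p_def)
  qed
qed

lemma card_one_point_extensions_le:
  assumes "finite C"
  shows "card {S. K \<subseteq> S \<and> S \<subseteq> C \<and> card S = Suc (card K)} \<le> card (C - K)"
proof -
  have "{S. K \<subseteq> S \<and> S \<subseteq> C \<and> card S = Suc (card K)} \<subseteq> (\<lambda>x. insert x K) ` (C - K)"
  proof
    fix S assume "S \<in> {S. K \<subseteq> S \<and> S \<subseteq> C \<and> card S = Suc (card K)}"
    then have S: "K \<subseteq> S" "S \<subseteq> C" "card S = Suc (card K)" by auto
    have "finite S" using S(2) assms by (rule finite_subset)
    then have "card (S - K) = 1" using S(1,3) by (simp add: card_Diff_subset finite_subset)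
    then obtain x where "S - K = {x}" by (rule card_1_singletonE)
    then show "S \<in> (\<lambda>x. insert x K) ` (C - K)" using S(1,2) by blast
  qed
  then show ?thesis
    using assms by (meson card_image_le card_mono finite_Diff finite_imageI order_trans)
qed

lemma extreme_symmetric_triples_bound:
  fixes p :: nat
  defines "F \<equiv> {S. symmetric_sequence S \<and> extreme S \<and> card S = 3 \<and> Min S = p}"
  shows "finite F" "card F \<le> 2"
proof -
  let ?C = "extreme_candidates p" and ?K = "{p, 2 * p - 1}"
  let ?G = "{S. ?K \<subseteq> S \<and> S \<subseteq> ?C \<and> card S = Suc (card ?K)}"
  have "F \<subseteq> ?G"
  proof
    fix S assume "S \<in> F"
    then have S: "symmetric_sequence S" "extreme S" "card S = 3" "Min S = p"
      by (simp_all add: F_def)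
    show "S \<in> ?G"
      using extreme_symmetric_sequence_ends[OF S(1,2)] extreme_symmetric_sequence_subset[OF S(1,2)]
      by (simp add: S(3,4))
  qed
  moreover have "finite ?G" using finite_extreme_candidates by simp
  moreover have "card ?G \<le> 2"
    using card_one_point_extensions_le[OF finite_extreme_candidates[of p], of ?K]
      card_extreme_candidates_diff_ends_le[of p] by linarith
  ultimately show "finite F" "card F \<le> 2"
    by (auto dest: finite_subset card_mono[rotated 1])
qed

lemma extreme_symmetric_quadruples_subset:
  "{S. symmetric_sequence S \<and> extreme S \<and> card S = 4 \<and> Min S = p} \<subseteq> {extreme_candidates p}"
proof
  fix S assume "S \<in> {S. symmetric_sequence S \<and> extreme S \<and> card S = 4 \<and> Min S = p}"
  then have S: "symmetric_sequence S" "extreme S" "card S = 4" "Min S = p" by simp_all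
  have "S \<subseteq> extreme_candidates p"
    using extreme_symmetric_sequence_subset[OF S(1,2)] by (simp add: S(4))
  moreover have "card (extreme_candidates p) \<le> card S"
    using card_extreme_candidates_le by (simp add: S(3))
  ultimately show "S \<in> {extreme_candidates p}"
    using card_seteq[OF finite_extreme_candidates] by blast
qed

lemma card_extreme_symmetric_sequence_le:
  assumes "symmetric_sequence S" "extreme S"
  shows "card S \<le> 4"
proof -
  have "card S \<le> card (extreme_candidates (Min S))"
    using extreme_symmetric_sequence_subset[OF assms] by (rule card_mono[OF finite_extreme_candidates])
  then show ?thesis
    using card_extreme_candidates_le by (rule order_trans)
qed

theorem corollary2:
  shows "(\<forall>p::nat. prime p \<longrightarrow>
            finite {S. symmetric_sequence S \<and> extreme S \<and> card S = 3 \<and> Min S = p} \<and>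
            card {S. symmetric_sequence S \<and> extreme S \<and> card S = 3 \<and> Min S = p} \<le> 2)
       \<and> (\<forall>p::nat. prime p \<longrightarrow>
            finite {S. symmetric_sequence S \<and> extreme S \<and> card S = 4 \<and> Min S = p} \<and>
            card {S. symmetric_sequence S \<and> extreme S \<and> card S = 4 \<and> Min S = p} \<le> 1)
       \<and> (\<forall>S. symmetric_sequence S \<and> extreme S \<longrightarrow> card S \<le> 4)"
proof (intro conjI allI impI)
  fix p :: nat
  show "finite {S. symmetric_sequence S \<and> extreme S \<and> card S = 3 \<and> Min S = p}"
    and "card {S. symmetric_sequence S \<and> extreme S \<and> card S = 3 \<and> Min S = p} \<le> 2"
    by (rule extreme_symmetric_triples_bound)+
next
  fix p :: nat
  show "finite {S. symmetric_sequence S \<and> extreme S \<and> card S = 4 \<and> Min S = p}"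
    and "card {S. symmetric_sequence S \<and> extreme S \<and> card S = 4 \<and> Min S = p} \<le> 1"
    using extreme_symmetric_quadruples_subset[of p]
    by (auto dest: finite_subset card_mono[rotated 1])
next
  fix S assume "symmetric_sequence S \<and> extreme S"
  then show "card S \<le> 4" using card_extreme_symmetric_sequence_le by blast
qed

end
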